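(* Let $t \in T$ with $t \geq 10^6$, and suppose $P(t) = 1$. Then $C_3(t) > 5$.
   Context: For positive integers $m, r$, $C_m(r)$ is the minimum odd positive integer $n$ such that there exist vectors $v_1, \ldots, v_n \in \mathbb{Z}^m$ (not necessarily distinct) with $|v_i| = \sqrt{r}$ (Euclidean norm) for every $i$ and $v_1 + \cdots + v_n = \mathbf{0}$; if no such odd $n$ exists, $C_m(r) = 0$. $T$ is the set of positive integers $t \equiv 2 \pmod 4$ whose square-free part has at least one odd prime factor $p$ with $p \equiv 2 \pmod 3$. For a positive integer $z$, $P(z)$ is the number of integer triples $(a,b,c)$ with $0 \leq a \leq b \leq c$ and $a^2 + b^2 + c^2 = z$. *)

theory Defs
  imports "HOL-Computational_Algebra.Computational_Algebra"
begin

definition sqnorm :: "int list \<Rightarrow> int" where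
  "sqnorm v = (\<Sum>x\<leftarrow>v. x ^ 2)"

definition zero_sum_config :: "nat \<Rightarrow> nat \<Rightarrow> nat \<Rightarrow> bool" where
  "zero_sum_config m r n \<longleftrightarrow>
     (\<exists>vs :: nat \<Rightarrow> int list.
        (\<forall>i<n. length (vs i) = m \<and> sqnorm (vs i) = int r) \<and>
        (\<forall>j<m. (\<Sum>i<n. vs i ! j) = 0))"

definition C :: "nat \<Rightarrow> nat \<Rightarrow> nat" where
  "C m r = (if \<exists>n. odd n \<and> zero_sum_config m r n
            then (LEAST n. odd n \<and> zero_sum_config m r n) else 0)"

definition sqfree_part :: "nat \<Rightarrow> nat" where
  "sqfree_part t = (\<Prod>p\<in>prime_factors t. p ^ (multiplicity p t mod 2))"

definition T :: "nat set" where
  "T = {t. t > 0 \<and> t mod 4 = 2 \<and>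
          (\<exists>p::nat. prime p \<and> odd p \<and> p dvd sqfree_part t \<and> p mod 3 = 2)}"

definition P :: "nat \<Rightarrow> nat" where
  "P z = card {(a::nat, b::nat, c::nat). a \<le> b \<and> b \<le> c \<and> a^2 + b^2 + c^2 = z}"

end

theory Submission
  imports Defs "HOL-Number_Theory.Number_Theory" "HOL-Combinatorics.Permutations"
begin

text \<open>
  Let \<open>t = a\<^sup>2 + b\<^sup>2 + c\<^sup>2\<close> be the unique representation. Every representation of \<open>t\<close> as a
  sum of three squares is then a signed permutation of \<open>(a, b, c)\<close>, and \<open>gcd a b c = 1\<close>:
  a common factor 2 contradicts \<open>t \<equiv> 2 (mod 4)\<close>, and a common odd prime \<open>p\<close> is removed by
  the rotation of \<open>\<int>\<^sup>3\<close> attached to a quaternion of norm \<open>p\<close> (Lagrange), which produces a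
  representation not divisible by \<open>p\<close>. Since \<open>t\<close> is even and \<open>(a, b, c)\<close> is primitive,
  differences of representations generate \<open>2\<int>\<^sup>3\<close>, and an odd zero-sum configuration exists,
  so \<open>C\<^sub>3(t) \<noteq> 0\<close>.

  A zero-sum configuration of \<open>n \<le> 5\<close> signed permutations of \<open>(a, b, c)\<close> yields a \<open>3 \<times> 3\<close>
  integer matrix \<open>R\<close> with \<open>R (a, b, c)\<^sup>T = 0\<close>, odd row and column sums, and rows and columns
  of \<open>\<ell>\<^sup>1\<close>-norm at most 5. If two rows are independent, \<open>(a, b, c)\<close> divides their cross
  product and \<open>t \<le> 7500\<close>. Otherwise \<open>R\<close> has rank one and its first row is a multiple of a
  sign vector, so \<open>\<plusminus>a \<plusminus> b \<plusminus> c = 0\<close> and \<open>t = 2 (x\<^sup>2 + x y + y\<^sup>2)\<close>; but a prime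
  \<open>p \<equiv> 2 (mod 3)\<close> divides \<open>x\<^sup>2 + x y + y\<^sup>2\<close> to an even power only.
\<close>

lemma less_3_iff: "k < 3 \<longleftrightarrow> k = 0 \<or> k = 1 \<or> k = (2::nat)"
  by auto

lemma sum_lessThan_3: "(\<Sum>k<3. f k) = f 0 + f 1 + f (2::nat)"
  by (simp add: numeral_3_eq_3 numeral_2_eq_2 add.assoc)

section \<open>Sums of four squares\<close>

definition sum_of_four_squares :: "int \<Rightarrow> bool" where
  "sum_of_four_squares n \<longleftrightarrow> (\<exists>a b c d. n = a\<^sup>2 + b\<^sup>2 + c\<^sup>2 + d\<^sup>2)"

lemma sum_of_four_squares_half:
  fixes n :: int
  assumes "sum_of_four_squares (2 * n)"
  shows "sum_of_four_squares n"
proof -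
  obtain a b c d where abcd: "2 * n = a\<^sup>2 + b\<^sup>2 + c\<^sup>2 + d\<^sup>2"
    using assms unfolding sum_of_four_squares_def by blast
  have halve: "sum_of_four_squares n"
    if ev: "even (x + y)" "even (z + w)" and sq: "2 * n = x\<^sup>2 + y\<^sup>2 + z\<^sup>2 + w\<^sup>2"
    for x y z w :: int
  proof -
    obtain k l where x: "x = 2 * k - y" and z: "z = 2 * l - w"
      using ev by (metis add_diff_cancel_right' evenE)
    have "2 * n = (2 * k - y)\<^sup>2 + y\<^sup>2 + (2 * l - w)\<^sup>2 + w\<^sup>2"
      using sq unfolding x z .
    also have "\<dots> = 2 * (k\<^sup>2 + (k - y)\<^sup>2 + l\<^sup>2 + (l - w)\<^sup>2)"
      by (simp add: power2_eq_square algebra_simps)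
    finally have "n = k\<^sup>2 + (k - y)\<^sup>2 + l\<^sup>2 + (l - w)\<^sup>2"
      by simp
    then show ?thesis
      unfolding sum_of_four_squares_def by blast
  qed
  have "even (a + b + c + d)"
    using abcd by (metis dvd_triv_left even_add even_power zero_less_numeral)
  then consider "even (a + b) \<and> even (c + d)" | "even (a + c) \<and> even (b + d)"
    | "even (a + d) \<and> even (b + c)"
    by (auto simp: even_add)
  then show ?thesis
  proof cases
    case 1
    then show ?thesis using halve[of a b c d] abcd by blast
  next
    case 2
    then show ?thesis using halve[of a c b d] abcd by (simp add: algebra_simps)
  next
    case 3
    then show ?thesis using halve[of a d b c] abcd by (simp add: algebra_simps)
  qed
qed

lemma euler_four_square_identity:
  fixes a b c d x y z w :: int
  shows "(a\<^sup>2 + b\<^sup>2 + c\<^sup>2 + d\<^sup>2) * (x\<^sup>2 + y\<^sup>2 + z\<^sup>2 + w\<^sup>2) =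
    (a*x + b*y + c*z + d*w)\<^sup>2 + (a*y - b*x + c*w - d*z)\<^sup>2 +
    (a*z - c*x + d*y - b*w)\<^sup>2 + (a*w - d*x + b*z - c*y)\<^sup>2"
  by (simp add: power2_eq_square algebra_simps)

lemma squares_mod_prime_inj_on:
  fixes p :: int
  assumes "prime p"
  shows "inj_on (\<lambda>x. x\<^sup>2 mod p) {0..(p - 1) div 2}"
proof (rule inj_onI)
  fix x y assume x: "x \<in> {0..(p - 1) div 2}" and y: "y \<in> {0..(p - 1) div 2}"
    and "x\<^sup>2 mod p = y\<^sup>2 mod p"
  then have "p dvd (x - y) * (x + y)"
    by (simp add: mod_eq_dvd_iff power2_eq_square algebra_simps)
  then have "p dvd x - y \<or> p dvd x + y"
    using assms by (simp add: prime_dvd_mult_iff)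
  moreover have "\<bar>x - y\<bar> < p" "\<bar>x + y\<bar> < p"
    using x y by auto
  ultimately have "x - y = 0 \<or> x + y = 0"
    using dvd_imp_le_int[of "x - y" p] dvd_imp_le_int[of "x + y" p] by fastforce
  then show "x = y"
    using x y by auto
qed

text \<open>Pigeonhole: the \<open>(p + 1)/2\<close> residues \<open>x\<^sup>2\<close> and the \<open>(p + 1)/2\<close> residues \<open>-1 - y\<^sup>2\<close>
  cannot all be distinct modulo \<open>p\<close>.\<close>
lemma prime_dvd_sum_two_squares_plus_one:
  fixes p :: int
  assumes "prime p" "odd p"
  obtains x y where "0 \<le> x" "2 * x < p" "0 \<le> y" "2 * y < p" "p dvd x\<^sup>2 + y\<^sup>2 + 1"
proof -
  define I where "I = {0..(p - 1) div 2}"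
  define f where "f = (\<lambda>x. x\<^sup>2 mod p)"
  define g where "g = (\<lambda>y. (-1 - y\<^sup>2) mod p)"
  have p: "p > 1" "2 * ((p - 1) div 2) + 1 = p"
    using assms by (auto simp: prime_gt_1_int elim!: oddE)
  have inj_f: "inj_on f I"
    using squares_mod_prime_inj_on[OF assms(1)] by (simp add: I_def f_def)
  moreover have "g x = g y \<longleftrightarrow> f y = f x" for x y
    by (simp add: f_def g_def mod_eq_dvd_iff)
  ultimately have inj_g: "inj_on g I"
    by (simp add: inj_on_def)
  have "f ` I \<inter> g ` I \<noteq> {}"
  proof
    assume disjoint: "f ` I \<inter> g ` I = {}"
    have "card (f ` I \<union> g ` I) = 2 * card I"
      using disjoint inj_f inj_g by (simp add: I_def card_Un_disjoint card_image)
    also have "\<dots> = nat p + 1"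
      using p by (simp add: I_def)
    finally have "card (f ` I \<union> g ` I) > card {0..<p}"
      by simp
    moreover have "f ` I \<union> g ` I \<subseteq> {0..<p}"
      using p by (auto simp: f_def g_def)
    ultimately show False
      by (meson card_mono finite_atLeastLessThan_int leD)
  qed
  then obtain x y where "x \<in> I" "y \<in> I" "f x = g y"
    by auto
  moreover from this have "p dvd x\<^sup>2 + y\<^sup>2 + 1"
    by (simp add: f_def g_def mod_eq_dvd_iff algebra_simps)
  ultimately show ?thesis
    using that p by (auto simp: I_def)
qed

lemma exists_centered_residue:
  fixes m x :: int
  assumes "odd m" "m > 0"
  obtains y k where "x = y + m * k" "2 * \<bar>y\<bar> \<le> m - 1"
proof -
  define h where "h = (m - 1) div 2"
  have m: "2 * h + 1 = m"
    using assms(1) by (auto simp: h_def elim!: oddE)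
  have "0 \<le> (x + h) mod m" "(x + h) mod m < m"
    using assms(2) by auto
  then have "2 * \<bar>(x + h) mod m - h\<bar> \<le> m - 1"
    using m by (cases "(x + h) mod m \<ge> h") auto
  moreover have "x = ((x + h) mod m - h) + m * ((x + h) div m)"
    by (simp add: algebra_simps mod_div_mult_eq[of "x + h" m, symmetric])
  ultimately show ?thesis
    using that by blast
qed

text \<open>Euler's descent: if \<open>x\<^sub>i \<equiv> y\<^sub>i (mod m)\<close>, then all four terms of Euler's identity for
  \<open>(\<Sum> x\<^sub>i\<^sup>2)(\<Sum> y\<^sub>i\<^sup>2) = m\<^sup>2 r p\<close> are divisible by \<open>m\<close>.\<close>
lemma sum_of_four_squares_descent_step:
  fixes m p r :: int
  assumes "m \<noteq> 0" and x: "m * p = x0\<^sup>2 + x1\<^sup>2 + x2\<^sup>2 + x3\<^sup>2" and y: "m * r = y0\<^sup>2 + y1\<^sup>2 + y2\<^sup>2 + y3\<^sup>2"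
    and "x0 = y0 + m * k0" "x1 = y1 + m * k1" "x2 = y2 + m * k2" "x3 = y3 + m * k3"
  shows "sum_of_four_squares (r * p)"
proof -
  define z0 where "z0 = r + (k0*y0 + k1*y1 + k2*y2 + k3*y3)"
  define z1 where "z1 = k0*y1 - k1*y0 + k2*y3 - k3*y2"
  define z2 where "z2 = k0*y2 - k2*y0 + k3*y1 - k1*y3"
  define z3 where "z3 = k0*y3 - k3*y0 + k1*y2 - k2*y1"
  have "x0*y0 + x1*y1 + x2*y2 + x3*y3 = m * z0"
    using y unfolding z0_def assms(4-7) by (simp add: power2_eq_square algebra_simps)
  moreover have "x0*y1 - x1*y0 + x2*y3 - x3*y2 = m * z1" "x0*y2 - x2*y0 + x3*y1 - x1*y3 = m * z2"
    "x0*y3 - x3*y0 + x1*y2 - x2*y1 = m * z3"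
    unfolding z1_def z2_def z3_def assms(4-7) by (simp_all add: algebra_simps)
  ultimately have "(m * p) * (m * r) = (m * z0)\<^sup>2 + (m * z1)\<^sup>2 + (m * z2)\<^sup>2 + (m * z3)\<^sup>2"
    unfolding x y euler_four_square_identity by simp
  then have "(m * m) * (r * p) = (m * m) * (z0\<^sup>2 + z1\<^sup>2 + z2\<^sup>2 + z3\<^sup>2)"
    by (simp add: power2_eq_square algebra_simps)
  then show ?thesis
    using assms(1) unfolding sum_of_four_squares_def by auto
qed

lemma exists_centered_residues4:
  fixes m x0 x1 x2 x3 :: int
  assumes "odd m" "m > 0"
  obtains y0 y1 y2 y3 k0 k1 k2 k3
  where "x0 = y0 + m * k0" "x1 = y1 + m * k1" "x2 = y2 + m * k2" "x3 = y3 + m * k3"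
    and "y0\<^sup>2 + y1\<^sup>2 + y2\<^sup>2 + y3\<^sup>2 < m * m"
proof -
  have sq_bound: "4 * y\<^sup>2 \<le> (m - 1)\<^sup>2" if "2 * \<bar>y\<bar> \<le> m - 1" for y
    using power_mono[OF that, of 2] by (simp add: power_mult_distrib)
  obtain y0 k0 where y0: "x0 = y0 + m * k0" "2 * \<bar>y0\<bar> \<le> m - 1"
    using exists_centered_residue[OF assms] .
  obtain y1 k1 where y1: "x1 = y1 + m * k1" "2 * \<bar>y1\<bar> \<le> m - 1"
    using exists_centered_residue[OF assms] .
  obtain y2 k2 where y2: "x2 = y2 + m * k2" "2 * \<bar>y2\<bar> \<le> m - 1"
    using exists_centered_residue[OF assms] .
  obtain y3 k3 where y3: "x3 = y3 + m * k3" "2 * \<bar>y3\<bar> \<le> m - 1"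
    using exists_centered_residue[OF assms] .
  have "y0\<^sup>2 + y1\<^sup>2 + y2\<^sup>2 + y3\<^sup>2 \<le> (m - 1)\<^sup>2"
    using sq_bound[OF y0(2)] sq_bound[OF y1(2)] sq_bound[OF y2(2)] sq_bound[OF y3(2)] by linarith
  also have "(m - 1)\<^sup>2 < m * m"
    using assms(2) by (simp add: power2_eq_square algebra_simps)
  finally show ?thesis
    using that y0(1) y1(1) y2(1) y3(1) by blast
qed

lemma four_squares_descent_odd:
  fixes m p :: int
  assumes "prime p" "odd m" "1 < m" "m < p" "sum_of_four_squares (m * p)"
  obtains r where "0 < r" "r < m" "sum_of_four_squares (r * p)"
proof -
  obtain x0 x1 x2 x3 where x: "m * p = x0\<^sup>2 + x1\<^sup>2 + x2\<^sup>2 + x3\<^sup>2"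
    using assms(5) unfolding sum_of_four_squares_def by blast
  have m: "m > 0"
    using assms(3) by simp
  obtain y0 y1 y2 y3 k0 k1 k2 k3 where y: "x0 = y0 + m * k0" "x1 = y1 + m * k1" "x2 = y2 + m * k2"
      "x3 = y3 + m * k3" and S_less: "y0\<^sup>2 + y1\<^sup>2 + y2\<^sup>2 + y3\<^sup>2 < m * m"
    using exists_centered_residues4[OF assms(2) m] .
  define S where "S = y0\<^sup>2 + y1\<^sup>2 + y2\<^sup>2 + y3\<^sup>2"
  have "m * p = S + m * (2 * (y0*k0 + y1*k1 + y2*k2 + y3*k3) + m * (k0\<^sup>2 + k1\<^sup>2 + k2\<^sup>2 + k3\<^sup>2))"
    unfolding x S_def y by (simp add: power2_eq_square algebra_simps)
  then have "m dvd S"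
    by (metis dvd_add_left_iff dvd_triv_left)
  then obtain r where r: "S = m * r"
    by blast
  have "r < m"
    using S_less r m unfolding S_def by (metis mult_less_cancel_left_pos)
  have "r \<noteq> 0"
  proof
    assume "r = 0"
    then have "y0 = 0 \<and> y1 = 0 \<and> y2 = 0 \<and> y3 = 0"
      using r by (simp add: S_def add_nonneg_eq_0_iff)
    then have "m * p = m * (m * (k0\<^sup>2 + k1\<^sup>2 + k2\<^sup>2 + k3\<^sup>2))"
      using x y by (simp add: power2_eq_square algebra_simps)
    then have "m dvd p"
      using m by simp
    then have "m = 1 \<or> m = p"
      using assms(1) m unfolding prime_int_iff by auto
    then show False
      using assms(3,4) by auto
  qed
  moreover have "0 \<le> m * r"
    by (simp add: S_def flip: r)
  then have "0 \<le> r"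
    using m by (simp add: zero_le_mult_iff)
  moreover have "sum_of_four_squares (r * p)"
    using m x r[unfolded S_def] y by (intro sum_of_four_squares_descent_step) auto
  ultimately show ?thesis
    using that[of r] \<open>r < m\<close> by simp
qed

lemma four_squares_descent:
  fixes m p :: int
  assumes "prime p" "0 < m" "m < p" "sum_of_four_squares (m * p)"
  shows "sum_of_four_squares p"
  using assms(2-4)
proof (induction "nat m" arbitrary: m rule: less_induct)
  case less
  consider "m = 1" | "1 < m" "even m" | "1 < m" "odd m"
    using less.prems(1) by linarith
  then show ?case
  proof cases
    case 1
    then show ?thesis
      using less.prems by simp
  next
    case 2
    then obtain m' where "m = 2 * m'"
      by blast
    then show ?thesis
      using less.hyps[of m'] less.prems 2 sum_of_four_squares_half[of "m' * p"]
      by (simp add: mult.assoc)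
  next
    case 3
    obtain r where "0 < r" "r < m" "sum_of_four_squares (r * p)"
      using four_squares_descent_odd[OF assms(1) 3(2) 3(1) less.prems(2,3)] .
    then show ?thesis
      using less.hyps[of r] less.prems by simp
  qed
qed

theorem prime_sum_of_four_squares:
  fixes p :: int
  assumes "prime p"
  shows "sum_of_four_squares p"
proof (cases "p = 2")
  case True
  have "(2::int) = 1\<^sup>2 + 1\<^sup>2 + 0\<^sup>2 + 0\<^sup>2"
    by simp
  then show ?thesis
    unfolding True sum_of_four_squares_def by blast
next
  case False
  have p: "p > 1"
    using assms by (simp add: prime_gt_1_int)
  then have "odd p"
    using assms False by (simp add: prime_odd_int)
  then obtain x y where xy: "0 \<le> x" "2 * x < p" "0 \<le> y" "2 * y < p" "p dvd x\<^sup>2 + y\<^sup>2 + 1"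
    using prime_dvd_sum_two_squares_plus_one[OF assms] by blast
  then obtain m where m: "x\<^sup>2 + y\<^sup>2 + 1 = m * p"
    by (metis dvdE mult.commute)
  have "(2 * x)\<^sup>2 \<le> (p - 1)\<^sup>2" "(2 * y)\<^sup>2 \<le> (p - 1)\<^sup>2"
    using power_mono[of "2 * x" "p - 1" 2] power_mono[of "2 * y" "p - 1" 2] xy by auto
  moreover have "2 * (p - 1)\<^sup>2 + 4 < 4 * (p * p)"
    using mult_pos_pos[of "p - 1" "p + 3"] p by (simp add: power2_eq_square algebra_simps)
  ultimately have "m * p < p * p"
    unfolding m[symmetric] by (simp add: power_mult_distrib)
  moreover have "0 < m * p"
    unfolding m[symmetric] by (simp add: add_nonneg_pos)
  moreover have "m * p = x\<^sup>2 + y\<^sup>2 + 1\<^sup>2 + 0\<^sup>2"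
    using m by simp
  then have "sum_of_four_squares (m * p)"
    unfolding sum_of_four_squares_def by blast
  ultimately show ?thesis
    using four_squares_descent[OF assms] p by (simp add: zero_less_mult_iff)
qed

section \<open>Representations by three squares\<close>

definition all_reps_signed_permutations :: "(nat \<Rightarrow> int) \<Rightarrow> bool" where
  "all_reps_signed_permutations w \<longleftrightarrow>
     (\<forall>u :: nat \<Rightarrow> int. (\<Sum>k<3. (u k)\<^sup>2) = (\<Sum>k<3. (w k)\<^sup>2) \<longrightarrow>
        (\<exists>\<sigma>. \<sigma> permutes {..<3} \<and> (\<forall>k<3. \<bar>u k\<bar> = w (\<sigma> k))))"

lemma sum_list_map_sort:
  fixes f :: "'a::linorder \<Rightarrow> 'b::comm_monoid_add"
  shows "sum_list (map f (sort xs)) = sum_list (map f xs)"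
proof -
  have "mset (map f (sort xs)) = mset (map f xs)"
    by simp
  then show ?thesis
    by (metis sum_mset_sum_list)
qed

lemma signed_permutation_if_unique_sorted_rep:
  fixes a b c t :: nat and u :: "nat \<Rightarrow> int"
  assumes unique: "\<And>a' b' c'. sorted [a', b', c'] \<Longrightarrow> a'\<^sup>2 + b'\<^sup>2 + c'\<^sup>2 = t \<Longrightarrow> [a', b', c'] = [a, b, c]"
    and u: "(\<Sum>k<3. (u k)\<^sup>2) = int t"
  shows "\<exists>\<sigma>. \<sigma> permutes {..<3} \<and> (\<forall>k<3. \<bar>u k\<bar> = int ([a, b, c] ! \<sigma> k))"
proof -
  define L where "L = [nat \<bar>u 0\<bar>, nat \<bar>u 1\<bar>, nat \<bar>u 2\<bar>]"
  have "int (sum_list (map (\<lambda>x. x\<^sup>2) L)) = int t"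
    using u by (simp add: L_def sum_lessThan_3)
  then have sum_L: "sum_list (map (\<lambda>x. x\<^sup>2) (sort L)) = t"
    by (simp only: of_nat_eq_iff sum_list_map_sort)
  have "length (sort L) = 3"
    by (simp add: L_def)
  then obtain a' b' c' where "sort L = [a', b', c']"
    by (cases "sort L"; cases "tl (sort L)"; cases "tl (tl (sort L))") auto
  moreover note sorted_sort[of L]
  ultimately have "sort L = [a, b, c]"
    using unique[of a' b' c'] sum_L by simp
  then have "mset L = mset [a, b, c]"
    by (metis mset_sort)
  then obtain \<sigma> where \<sigma>: "\<sigma> permutes {..<length [a, b, c]}" "permute_list \<sigma> [a, b, c] = L"
    by (rule mset_eq_permutation)
  have "nat \<bar>u k\<bar> = [a, b, c] ! \<sigma> k" if "k < 3" for k
    using permute_list_nth[OF \<sigma>(1), of k] \<sigma>(2) that by (auto simp: L_def less_3_iff)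
  moreover have "\<sigma> permutes {..<3}"
    using \<sigma>(1) by (simp add: numeral_3_eq_3)
  ultimately show ?thesis
    by (metis int_nat_eq abs_ge_zero max_def)
qed

lemma P_eq_1_imp_all_reps_signed_permutations:
  fixes t :: nat
  assumes "P t = 1"
  obtains w :: "nat \<Rightarrow> int" where "(\<Sum>k<3. (w k)\<^sup>2) = int t" "all_reps_signed_permutations w"
proof -
  let ?S = "{(a, b, c). a \<le> b \<and> b \<le> c \<and> a\<^sup>2 + b\<^sup>2 + c\<^sup>2 = t}"
  have "card ?S = 1"
    using assms unfolding P_def .
  then obtain x where "?S = {x}"
    by (rule card_1_singletonE)
  moreover obtain a b c where "x = (a, b, c)"
    by (cases x)
  ultimately have S: "?S = {(a, b, c)}"
    by simp
  define w where "w k = int ([a, b, c] ! k)" for k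
  have unique: "[a', b', c'] = [a, b, c]" if "sorted [a', b', c']" "a'\<^sup>2 + b'\<^sup>2 + c'\<^sup>2 = t" for a' b' c'
  proof -
    have "(a', b', c') \<in> ?S"
      using that by simp
    then show ?thesis
      using S by simp
  qed
  have "(a, b, c) \<in> ?S"
    using S by simp
  then have "(\<Sum>k<3. (w k)\<^sup>2) = int t"
    by (simp add: w_def sum_lessThan_3 flip: of_nat_power of_nat_add)
  moreover from this have "all_reps_signed_permutations w"
    using signed_permutation_if_unique_sorted_rep[OF unique]
    unfolding all_reps_signed_permutations_def w_def by simp
  ultimately show ?thesis
    using that by blast
qed

section \<open>Quaternion rotations and primitivity\<close>

lemma odd_prime_dvd_double_iff:
  fixes p x :: int
  assumes "prime p" "odd p"
  shows "p dvd 2 * x \<longleftrightarrow> p dvd x"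
proof -
  have "\<not> p dvd 2"
  proof
    assume "p dvd 2"
    then have "p \<le> 2"
      by (simp add: zdvd_imp_le)
    then show False
      using prime_ge_2_int[OF assms(1)] assms(2) by simp
  qed
  then show ?thesis
    using assms(1) by (auto simp: prime_dvd_mult_iff)
qed

text \<open>The matrix of \<open>u \<mapsto> q u q\<^sup>*\<close> on the pure quaternions, for \<open>q = a + bi + cj + dk\<close>.\<close>
definition quat_rotation :: "int \<Rightarrow> int \<Rightarrow> int \<Rightarrow> int \<Rightarrow> nat \<Rightarrow> nat \<Rightarrow> int" where
  "quat_rotation a b c d j k =
     [[a\<^sup>2 + b\<^sup>2 - c\<^sup>2 - d\<^sup>2, 2 * (b*c - a*d), 2 * (b*d + a*c)],
      [2 * (b*c + a*d), a\<^sup>2 - b\<^sup>2 + c\<^sup>2 - d\<^sup>2, 2 * (c*d - a*b)],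
      [2 * (b*d - a*c), 2 * (c*d + a*b), a\<^sup>2 - b\<^sup>2 - c\<^sup>2 + d\<^sup>2]] ! j ! k"

lemma quat_rotation_sum_squares:
  "(\<Sum>j<3. (\<Sum>k<3. quat_rotation a b c d j k * u k)\<^sup>2) =
     (a\<^sup>2 + b\<^sup>2 + c\<^sup>2 + d\<^sup>2)\<^sup>2 * (\<Sum>k<3. (u k)\<^sup>2)"
  by (simp add: sum_lessThan_3 quat_rotation_def power2_eq_square algebra_simps)

lemma quat_rotation_diagonal_not_dvd:
  fixes p a b c d :: int
  assumes "prime p" "odd p" "p = a\<^sup>2 + b\<^sup>2 + c\<^sup>2 + d\<^sup>2"
  obtains k where "k < 3" "\<not> p dvd quat_rotation a b c d k k"
proof -
  have "\<exists>k<3. \<not> p dvd quat_rotation a b c d k k"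
  proof (rule ccontr)
    assume "\<not> ?thesis"
    then have diag: "p dvd quat_rotation a b c d k k + p" if "k < 3" for k
      using that by auto
    have "quat_rotation a b c d 0 0 + p = 2 * (a\<^sup>2 + b\<^sup>2)"
      "quat_rotation a b c d 1 1 + p = 2 * (a\<^sup>2 + c\<^sup>2)"
      "quat_rotation a b c d 2 2 + p = 2 * (a\<^sup>2 + d\<^sup>2)"
      by (simp_all add: quat_rotation_def assms(3) numeral_2_eq_2)
    then have "p dvd 2 * (a\<^sup>2 + b\<^sup>2)" "p dvd 2 * (a\<^sup>2 + c\<^sup>2)" "p dvd 2 * (a\<^sup>2 + d\<^sup>2)"
      using diag[of 0] diag[of 1] diag[of 2] by simp_all
    then have b: "p dvd a\<^sup>2 + b\<^sup>2" and c: "p dvd a\<^sup>2 + c\<^sup>2" and d: "p dvd a\<^sup>2 + d\<^sup>2"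
      by (simp_all only: odd_prime_dvd_double_iff[OF assms(1,2)])
    have "(a\<^sup>2 + b\<^sup>2) + (a\<^sup>2 + c\<^sup>2) + (a\<^sup>2 + d\<^sup>2) - p = 2 * a\<^sup>2"
      by (simp add: assms(3))
    then have "p dvd 2 * a\<^sup>2"
      using b c d by (metis dvd_add dvd_diff dvd_refl)
    then have "p dvd a"
      using assms(1,2) by (simp add: odd_prime_dvd_double_iff prime_dvd_power_iff)
    then have "p dvd a\<^sup>2"
      by (simp add: power2_eq_square)
    then have "p dvd b" "p dvd c" "p dvd d"
      using assms(1) b c d by (simp_all add: prime_dvd_power_iff dvd_add_right_iff)
    then have "p * p dvd p"
      using \<open>p dvd a\<close> unfolding assms(3) power2_eq_square by (intro dvd_add mult_dvd_mono)
    then show False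
      using prime_gt_1_int[OF assms(1)] by simp
  qed
  then show ?thesis
    using that by blast
qed

lemma sum_squares_comp_transpose:
  fixes w :: "nat \<Rightarrow> int"
  assumes "i < m" "k < m"
  shows "(\<Sum>l<m. ((w \<circ> Transposition.transpose i k) l)\<^sup>2) = (\<Sum>l<m. (w l)\<^sup>2)"
  using sum.permute[OF permutes_swap_id[of i "{..<m}" k], of "\<lambda>l. (w l)\<^sup>2"] assms
  by (simp add: comp_def)

lemma sum_squares_transpose_update:
  fixes w :: "nat \<Rightarrow> int"
  assumes "i < m" "k < m" "x\<^sup>2 = (w i)\<^sup>2"
  shows "(\<Sum>l<m. (((w \<circ> Transposition.transpose i k)(k := x)) l)\<^sup>2) = (\<Sum>l<m. (w l)\<^sup>2)"
proof -
  have "(\<Sum>l<m. (((w \<circ> Transposition.transpose i k)(k := x)) l)\<^sup>2) =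
        (\<Sum>l<m. ((w \<circ> Transposition.transpose i k) l)\<^sup>2)"
    using assms(3) by (intro sum.cong) auto
  then show ?thesis
    using sum_squares_comp_transpose[OF assms(1,2)] by simp
qed

text \<open>Comparing \<open>u\<close> with \<open>u\<close> with its \<open>k\<close>-th coordinate negated, where \<open>u\<close> is \<open>v\<close>
  with coordinates \<open>i\<close> and \<open>k\<close> swapped, isolates \<open>2 v\<^sub>i M\<^sub>j\<^sub>k\<close>.\<close>
lemma prime_dvd_entry_if_dvd_on_sphere:
  fixes p :: int and M :: "nat \<Rightarrow> nat \<Rightarrow> int" and v :: "nat \<Rightarrow> int"
  assumes "prime p" "odd p" "i < m" "\<not> p dvd v i" "k < m"
    and dvd: "\<And>u. (\<Sum>l<m. (u l)\<^sup>2) = (\<Sum>l<m. (v l)\<^sup>2) \<Longrightarrow> p dvd (\<Sum>l<m. M j l * u l)"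
  shows "p dvd M j k"
proof -
  define u where "u = v \<circ> Transposition.transpose i k"
  have "p dvd (\<Sum>l<m. M j l * (u(k := v i)) l) - (\<Sum>l<m. M j l * (u(k := - v i)) l)"
    using dvd[of "u(k := v i)"] dvd[of "u(k := - v i)"] sum_squares_transpose_update[OF assms(3,5)]
    by (simp add: u_def dvd_diff)
  also have "\<dots> = (\<Sum>l<m. if l = k then 2 * (v i * M j k) else 0)"
    unfolding sum_subtractf[symmetric] by (rule sum.cong) auto
  also have "\<dots> = 2 * (v i * M j k)"
    using assms(5) by simp
  finally have "p dvd v i * M j k"
    using odd_prime_dvd_double_iff[OF assms(1,2)] by blast
  then show ?thesis
    using assms(1,4) by (simp add: prime_dvd_mult_iff)
qed

lemma sum_three_squares_not_dvd:
  fixes p h :: int and v :: "nat \<Rightarrow> int"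
  assumes "prime p" "odd p" "h \<noteq> 0" "i < 3" "\<not> p dvd v i"
  obtains u :: "nat \<Rightarrow> int" and k where
    "(\<Sum>l<3. (u l)\<^sup>2) = (p * h)\<^sup>2 * (\<Sum>l<3. (v l)\<^sup>2)" "k < 3" "\<not> p * h dvd u k"
proof -
  obtain a b c d where p: "p = a\<^sup>2 + b\<^sup>2 + c\<^sup>2 + d\<^sup>2"
    using prime_sum_of_four_squares[OF assms(1)] unfolding sum_of_four_squares_def by blast
  let ?R = "quat_rotation a b c d"
  obtain k where k: "k < 3" "\<not> p dvd ?R k k"
    using quat_rotation_diagonal_not_dvd[OF assms(1,2) p] .
  then obtain u' where u': "(\<Sum>l<3. (u' l)\<^sup>2) = (\<Sum>l<3. (v l)\<^sup>2)"
    and not_dvd: "\<not> p dvd (\<Sum>l<3. ?R k l * u' l)"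
    using prime_dvd_entry_if_dvd_on_sphere[where M = ?R and j = k and m = 3 and v = v,
      OF assms(1,2,4,5) k(1)] by blast
  define u where "u j = h * (\<Sum>l<3. ?R j l * u' l)" for j
  have "(\<Sum>j<3. (u j)\<^sup>2) = h\<^sup>2 * (\<Sum>j<3. (\<Sum>l<3. ?R j l * u' l)\<^sup>2)"
    unfolding u_def power_mult_distrib by (simp add: sum_distrib_left)
  also have "\<dots> = (p * h)\<^sup>2 * (\<Sum>l<3. (v l)\<^sup>2)"
    by (simp add: quat_rotation_sum_squares u' p[symmetric] power_mult_distrib)
  finally have "(\<Sum>j<3. (u j)\<^sup>2) = (p * h)\<^sup>2 * (\<Sum>l<3. (v l)\<^sup>2)" .
  moreover have "\<not> p * h dvd u k"
    using not_dvd assms(3) by (simp add: u_def mult.commute[of h])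
  ultimately show ?thesis
    using that k(1) by blast
qed

lemma gcd3_bezout:
  fixes w :: "nat \<Rightarrow> int"
  obtains \<beta> where "(\<Sum>k<3. \<beta> k * w k) = gcd (w 0) (gcd (w 1) (w 2))"
proof -
  obtain y' z' where "y' * w 1 + z' * w 2 = gcd (w 1) (w 2)"
    using bezout_int by blast
  moreover obtain x y where "x * w 0 + y * gcd (w 1) (w 2) = gcd (w 0) (gcd (w 1) (w 2))"
    using bezout_int by blast
  ultimately have "x * w 0 + (y * y') * w 1 + (y * z') * w 2 = gcd (w 0) (gcd (w 1) (w 2))"
    by (metis (no_types, lifting) add.assoc distrib_left mult.assoc)
  then have "(\<Sum>k<3. [x, y * y', y * z'] ! k * w k) = gcd (w 0) (gcd (w 1) (w 2))"
    by (simp add: sum_lessThan_3)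
  then show ?thesis
    using that by blast
qed

lemma gcd3_dvd:
  fixes w :: "nat \<Rightarrow> int"
  assumes "l < 3"
  shows "gcd (w 0) (gcd (w 1) (w 2)) dvd w l"
  using assms by (auto simp: less_3_iff intro: dvd_trans)

lemma odd_prime_not_dvd_gcd3:
  fixes w :: "nat \<Rightarrow> int" and p :: int
  assumes reps: "all_reps_signed_permutations w" and p: "prime p" "odd p"
    and nonzero: "gcd (w 0) (gcd (w 1) (w 2)) \<noteq> 0"
  shows "\<not> p dvd gcd (w 0) (gcd (w 1) (w 2))"
proof
  define g where "g = gcd (w 0) (gcd (w 1) (w 2))"
  assume "p dvd gcd (w 0) (gcd (w 1) (w 2))"
  then have "p dvd g"
    by (simp add: g_def)
  then obtain h where h: "g = p * h"
    by (rule dvdE)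
  then have "h \<noteq> 0"
    using nonzero by (auto simp: g_def)
  define v where "v k = w k div g" for k
  have w: "w k = g * v k" if "k < 3" for k
    using gcd3_dvd[OF that] by (simp add: v_def g_def)
  have "\<exists>i<3. \<not> p dvd v i"
  proof (rule ccontr)
    assume "\<not> ?thesis"
    then have "p * g dvd w k" if "k < 3" for k
      using that w by (simp add: mult.commute)
    then have "p * g dvd g"
      by (simp add: g_def sum_lessThan_3)
    then show False
      using nonzero p(1) unfolding g_def by (metis dvd_times_right_cancel_iff mult_1 not_prime_unit)
  qed
  then obtain i where i: "i < 3" "\<not> p dvd v i"
    by blast
  obtain u :: "nat \<Rightarrow> int" and k where u: "(\<Sum>l<3. (u l)\<^sup>2) = (p * h)\<^sup>2 * (\<Sum>l<3. (v l)\<^sup>2)" "k < 3"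
    and not_dvd: "\<not> g dvd u k"
    using sum_three_squares_not_dvd[where v = v and i = i, OF p \<open>h \<noteq> 0\<close> i] unfolding h .
  have "(\<Sum>l<3. (u l)\<^sup>2) = (\<Sum>l<3. (w l)\<^sup>2)"
    using u(1) w by (simp add: sum_lessThan_3 h power_mult_distrib algebra_simps)
  then obtain \<sigma> where "\<sigma> permutes {..<3}" "\<bar>u k\<bar> = w (\<sigma> k)"
    using reps u(2) unfolding all_reps_signed_permutations_def by blast
  moreover from this(1) have "\<sigma> k < 3"
    using permutes_in_image u(2) by fastforce
  ultimately have "g dvd \<bar>u k\<bar>"
    using gcd3_dvd by (simp add: g_def)
  then show False
    using not_dvd by simp
qed

lemma gcd3_eq_1_if_all_reps_signed_permutations:
  fixes w :: "nat \<Rightarrow> int"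
  assumes reps: "all_reps_signed_permutations w" and mod4: "(\<Sum>k<3. (w k)\<^sup>2) mod 4 = 2"
  shows "gcd (w 0) (gcd (w 1) (w 2)) = 1"
proof (rule ccontr)
  define g where "g = gcd (w 0) (gcd (w 1) (w 2))"
  assume "gcd (w 0) (gcd (w 1) (w 2)) \<noteq> 1"
  then obtain p where p: "prime p" "p dvd g"
    using prime_factor_int[of g] by (auto simp: g_def)
  have "g \<noteq> 0"
    using mod4 by (auto simp: g_def sum_lessThan_3)
  have "odd p"
  proof
    assume "even p"
    then have "2 dvd w l" if "l < 3" for l
      using gcd3_dvd[OF that] p(2) unfolding g_def by (meson dvd_trans)
    then have "2 * 2 dvd (w l)\<^sup>2" if "l < 3" for l
      using that unfolding power2_eq_square by (intro mult_dvd_mono)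
    then have "4 dvd (\<Sum>k<3. (w k)\<^sup>2)"
      by (simp add: sum_lessThan_3)
    then show False
      using mod4 by simp
  qed
  then show False
    using odd_prime_not_dvd_gcd3[OF reps p(1)] p(2) \<open>g \<noteq> 0\<close> by (simp add: g_def)
qed

section \<open>Odd zero-sum configurations\<close>

lemma sqnorm_conv_sum: "sqnorm v = (\<Sum>k<length v. (v ! k)\<^sup>2)"
  by (simp add: sqnorm_def sum_list_sum_nth atLeast0LessThan)

lemma zero_sum_config_iff:
  "zero_sum_config m r n \<longleftrightarrow>
     (\<exists>v :: nat \<Rightarrow> nat \<Rightarrow> int. (\<forall>i<n. (\<Sum>k<m. (v i k)\<^sup>2) = int r) \<and> (\<forall>k<m. (\<Sum>i<n. v i k) = 0))"
proof
  assume "zero_sum_config m r n"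
  then obtain vs where vs: "\<forall>i<n. length (vs i) = m \<and> sqnorm (vs i) = int r"
    "\<forall>k<m. (\<Sum>i<n. vs i ! k) = 0"
    unfolding zero_sum_config_def by blast
  have "(\<Sum>k<m. (vs i ! k)\<^sup>2) = int r" if "i < n" for i
    using vs(1)[rule_format, OF that] by (elim conjE) (simp add: sqnorm_conv_sum)
  with vs(2) show "\<exists>v. (\<forall>i<n. (\<Sum>k<m. (v i k)\<^sup>2) = int r) \<and> (\<forall>k<m. (\<Sum>i<n. v i k) = 0)"
    by (intro exI[of _ "\<lambda>i k. vs i ! k"]) simp
next
  assume "\<exists>v. (\<forall>i<n. (\<Sum>k<m. (v i k)\<^sup>2) = int r) \<and> (\<forall>k<m. (\<Sum>i<n. v i k) = 0)"
  then obtain v :: "nat \<Rightarrow> nat \<Rightarrow> int"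
    where "\<forall>i<n. (\<Sum>k<m. (v i k)\<^sup>2) = int r" "\<forall>k<m. (\<Sum>i<n. v i k) = 0"
    by blast
  then show "zero_sum_config m r n"
    unfolding zero_sum_config_def
    by (intro exI[of _ "\<lambda>i. map (v i) [0..<m]"]) (simp add: sqnorm_conv_sum)
qed

text \<open>\<open>sphere_sum m r e s\<close>: \<open>s\<close> is a sum of vectors of \<open>\<int>\<^sup>m\<close> of squared norm \<open>r\<close>,
  with an odd number of summands iff \<open>e\<close>.\<close>
inductive sphere_sum :: "nat \<Rightarrow> nat \<Rightarrow> bool \<Rightarrow> (nat \<Rightarrow> int) \<Rightarrow> bool" for m r where
  empty: "sphere_sum m r False (\<lambda>_. 0)"
| add: "sphere_sum m r e s \<Longrightarrow> (\<Sum>k<m. (u k)\<^sup>2) = int r \<Longrightarrow> sphere_sum m r (\<not> e) (\<lambda>k. s k + u k)"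

lemma sphere_sum_decompose:
  assumes "sphere_sum m r e s"
  shows "\<exists>(n::nat) v. (odd n \<longleftrightarrow> e) \<and> (\<forall>i<n. (\<Sum>k<m. (v i k)\<^sup>2) = int r) \<and> (\<forall>k. (\<Sum>i<n. v i k) = s k)"
  using assms
proof (induction rule: sphere_sum.induct)
  case empty
  show ?case
    by (intro exI[of _ 0] exI[of _ "\<lambda>_ _. 0"]) auto
next
  case (add e s u)
  then obtain n :: nat and v where v: "odd n \<longleftrightarrow> e" "\<forall>i<n. (\<Sum>k<m. (v i k)\<^sup>2) = int r"
    "\<forall>k. (\<Sum>i<n. v i k) = s k"
    by blast
  have "(\<Sum>i<Suc n. (v(n := u)) i k) = s k + u k" for k
  proof -
    have "(\<Sum>i<n. (v(n := u)) i k) = (\<Sum>i<n. v i k)"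
      by (rule sum.cong) auto
    then show ?thesis
      using v(3) by simp
  qed
  moreover have "\<forall>i<Suc n. (\<Sum>k<m. ((v(n := u)) i k)\<^sup>2) = int r"
    using v(2) add.hyps(2) by (simp add: less_Suc_eq)
  ultimately show ?case
    using v(1) by (intro exI[of _ "Suc n"] exI[of _ "v(n := u)"]) simp
qed

lemma sphere_sum_zero_sum_config:
  assumes "sphere_sum m r True s" "\<forall>k<m. s k = 0"
  shows "\<exists>n. odd n \<and> zero_sum_config m r n"
proof -
  obtain n :: nat and v where "odd n" "\<forall>i<n. (\<Sum>k<m. (v i k)\<^sup>2) = int r"
    "\<forall>k. (\<Sum>i<n. v i k) = s k"
    using sphere_sum_decompose[OF assms(1)] by blast
  moreover from this(3) have "\<forall>k<m. (\<Sum>i<n. v i k) = 0"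
    using assms(2) by simp
  ultimately show ?thesis
    unfolding zero_sum_config_iff by blast
qed

lemma sphere_sum_add_multiple_diff:
  assumes "sphere_sum m r e s" "(\<Sum>k<m. (u k)\<^sup>2) = int r" "(\<Sum>k<m. (u' k)\<^sup>2) = int r"
  shows "sphere_sum m r e (\<lambda>k. s k + c * (u k - u' k))"
proof -
  have "sphere_sum m r e (\<lambda>k. s k + int n * (u k - u' k))"
    if "(\<Sum>k<m. (u k)\<^sup>2) = int r" "(\<Sum>k<m. (u' k)\<^sup>2) = int r" for n u u'
  proof (induction n)
    case 0
    then show ?case
      using assms(1) by simp
  next
    case (Suc n)
    have "(\<Sum>k<m. (- u' k)\<^sup>2) = int r"
      using that(2) by simp
    then have "sphere_sum m r (\<not> \<not> e) (\<lambda>k. (s k + int n * (u k - u' k) + u k) + - u' k)"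
      using Suc that(1) by (intro sphere_sum.add)
    then show ?case
      by (simp add: algebra_simps)
  qed
  from this[of u u' "nat c"] this[of u' u "nat (- c)"] assms(2,3) show ?thesis
    by (cases "c \<ge> 0") (simp_all add: algebra_simps)
qed

lemma sphere_sum_add_axis:
  assumes "sphere_sum m r e s" "(\<Sum>k<m. (w k)\<^sup>2) = int r" "i < m" "j < m"
  shows "sphere_sum m r e (\<lambda>k. s k + (if k = j then 2 * c * w i else 0))"
proof -
  let ?u = "w \<circ> Transposition.transpose i j"
  have "sphere_sum m r e (\<lambda>k. s k + c * ((?u(j := w i)) k - (?u(j := - w i)) k))"
    using assms sum_squares_transpose_update[OF assms(3,4)]
    by (intro sphere_sum_add_multiple_diff) simp_all
  moreover have "(\<lambda>k. s k + c * ((?u(j := w i)) k - (?u(j := - w i)) k)) =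
                 (\<lambda>k. s k + (if k = j then 2 * c * w i else 0))"
    by (simp add: fun_eq_iff)
  ultimately show ?thesis
    by simp
qed

lemma sphere_sum_add_even_axis:
  assumes "sphere_sum m r e s" "(\<Sum>k<m. (w k)\<^sup>2) = int r" "(\<Sum>k<m. \<beta> k * w k) = 1" "j < m"
  shows "sphere_sum m r e (\<lambda>k. s k + (if k = j then 2 * c else 0))"
proof -
  have "sphere_sum m r e (\<lambda>k. s k + (if k = j then 2 * c * (\<Sum>i<K. \<beta> i * w i) else 0))"
    if "K \<le> m" for K
    using that
  proof (induction K)
    case 0
    have "(\<lambda>k. s k + (if k = j then 2 * c * (\<Sum>i<0. \<beta> i * w i) else 0)) = s"
      by (simp add: fun_eq_iff)
    then show ?case
      using assms(1) by simp
  next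
    case (Suc K)
    then have "sphere_sum m r e (\<lambda>k. s k + (if k = j then 2 * c * (\<Sum>i<K. \<beta> i * w i) else 0))"
      by simp
    then have "sphere_sum m r e (\<lambda>k. (s k + (if k = j then 2 * c * (\<Sum>i<K. \<beta> i * w i) else 0))
                 + (if k = j then 2 * (c * \<beta> K) * w K else 0))"
      using sphere_sum_add_axis[OF _ assms(2) _ assms(4)] Suc.prems by simp
    moreover have "(\<lambda>k. (s k + (if k = j then 2 * c * (\<Sum>i<K. \<beta> i * w i) else 0))
                 + (if k = j then 2 * (c * \<beta> K) * w K else 0)) =
                 (\<lambda>k. s k + (if k = j then 2 * c * (\<Sum>i<Suc K. \<beta> i * w i) else 0))"
      by (simp add: fun_eq_iff algebra_simps)
    ultimately show ?case
      by simp
  qed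
  from this[of m] show ?thesis
    by (simp add: assms(3) cong: if_cong)
qed

lemma sphere_sum_clear_even:
  assumes "sphere_sum m r e s" "(\<Sum>k<m. (w k)\<^sup>2) = int r" "(\<Sum>k<m. \<beta> k * w k) = 1"
    and "\<forall>k<m. even (s k)"
  shows "sphere_sum m r e (\<lambda>k. if k < m then 0 else s k)"
proof -
  have "sphere_sum m r e (\<lambda>k. if k < K then 0 else s k)" if "K \<le> m" for K
    using that
  proof (induction K)
    case 0
    then show ?case
      using assms(1) by simp
  next
    case (Suc K)
    obtain x where x: "s K = 2 * x"
      using assms(4) Suc.prems by (meson Suc_le_lessD evenE)
    have "sphere_sum m r e (\<lambda>k. (if k < K then 0 else s k) + (if k = K then 2 * (- x) else 0))"
      using Suc assms(2,3) by (intro sphere_sum_add_even_axis) simp_all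
    moreover have "(\<lambda>k. (if k < K then 0 else s k) + (if k = K then 2 * (- x) else 0)) =
                   (\<lambda>k. if k < Suc K then 0 else s k)"
      using x by (auto simp: less_Suc_eq)
    ultimately show ?case
      by simp
  qed
  from this[of m] show ?thesis
    by simp
qed

lemma sphere_sum_three_even:
  fixes w :: "nat \<Rightarrow> int"
  assumes "(\<Sum>k<3. (w k)\<^sup>2) = int r" "even r"
  obtains s where "sphere_sum 3 r True s" "\<forall>k<3. even (s k)"
proof -
  let ?w = "\<lambda>i k. (w \<circ> Transposition.transpose i k)"
  have "sphere_sum 3 r (\<not> False) (\<lambda>k. 0 + w k)"
    using sphere_sum.empty assms(1) by (rule sphere_sum.add)
  \<comment> \<open>the \<open>k\<close>-th coordinate of this sum of four vectors is \<open>4 w\<^sub>k - (w\<^sub>0 + w\<^sub>1 + w\<^sub>2)\<close>\<close>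
  then have "sphere_sum 3 r True
      (\<lambda>k. w k + 1 * (w k - ?w 0 2 k) + 1 * (w k - ?w 1 2 k) + 1 * (w k - ?w 0 1 k))"
    using assms(1) sum_squares_comp_transpose[of _ 3 _ w]
    by (intro sphere_sum_add_multiple_diff) simp_all
  moreover have "even (\<Sum>k<3. (w k)\<^sup>2)"
    using assms by simp
  then have "even (w 0 + w 1 + w 2)"
    by (simp add: sum_lessThan_3 even_add)
  then obtain h where h: "w 0 + w 1 + w 2 = 2 * h"
    by (rule evenE)
  have "w k + 1 * (w k - ?w 0 2 k) + 1 * (w k - ?w 1 2 k) + 1 * (w k - ?w 0 1 k) = 2 * (2 * w k - h)"
    if "k < 3" for k
    using that h by (auto simp: less_3_iff transpose_def)
  then have "\<forall>k<3. even (w k + 1 * (w k - ?w 0 2 k) + 1 * (w k - ?w 1 2 k) + 1 * (w k - ?w 0 1 k))"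
    by (metis dvd_triv_left)
  ultimately show ?thesis
    using that by blast
qed

lemma odd_zero_sum_config_exists:
  fixes w \<beta> :: "nat \<Rightarrow> int"
  assumes "(\<Sum>k<3. (w k)\<^sup>2) = int r" "even r" "(\<Sum>k<3. \<beta> k * w k) = 1"
  shows "\<exists>n. odd n \<and> zero_sum_config 3 r n"
proof -
  obtain s where "sphere_sum 3 r True s" "\<forall>k<3. even (s k)"
    using sphere_sum_three_even[OF assms(1,2)] .
  then have "sphere_sum 3 r True (\<lambda>k. if k < 3 then 0 else s k)"
    using assms(1,3) by (intro sphere_sum_clear_even)
  then show ?thesis
    by (rule sphere_sum_zero_sum_config) simp
qed

section \<open>Signed permutation matrices\<close>

text \<open>Unlike \<^const>\<open>sgn\<close>, \<open>unit_sign\<close> never vanishes, so it is always odd.\<close>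
definition unit_sign :: "int \<Rightarrow> int" where
  "unit_sign x = (if x < 0 then -1 else 1)"

lemma unit_sign_mult_abs [simp]: "unit_sign x * \<bar>x\<bar> = x"
  by (simp add: unit_sign_def)

lemma abs_unit_sign [simp]: "\<bar>unit_sign x\<bar> = 1"
  by (simp add: unit_sign_def)

lemma odd_unit_sign [simp]: "odd (unit_sign x)"
  by (simp add: unit_sign_def)

lemma odd_sum_of_odd_iff:
  fixes f :: "nat \<Rightarrow> int"
  assumes "\<And>i. i < n \<Longrightarrow> odd (f i)"
  shows "odd (\<Sum>i<n. f i) \<longleftrightarrow> odd n"
  using assms by (induction n) auto

definition perm_matrix :: "(nat \<Rightarrow> nat) \<Rightarrow> nat \<Rightarrow> nat \<Rightarrow> int" where
  "perm_matrix \<sigma> j k = (if \<sigma> j = k then 1 else 0)"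

lemma abs_perm_matrix [simp]: "\<bar>perm_matrix \<sigma> j k\<bar> = perm_matrix \<sigma> j k"
  by (simp add: perm_matrix_def)

lemma perm_matrix_row_sum:
  assumes "\<sigma> permutes {..<m}" "j < m"
  shows "(\<Sum>k<m. perm_matrix \<sigma> j k * f k) = f (\<sigma> j)"
proof -
  have "\<sigma> j < m"
    using permutes_in_image[OF assms(1)] assms(2) by simp
  moreover have "(\<Sum>k<m. perm_matrix \<sigma> j k * f k) = (\<Sum>k<m. if \<sigma> j = k then f k else 0)"
    by (rule sum.cong) (simp_all add: perm_matrix_def)
  ultimately show ?thesis
    by simp
qed

lemma perm_matrix_column_sum:
  assumes "\<sigma> permutes {..<m}" "k < m"
  shows "(\<Sum>j<m. perm_matrix \<sigma> j k * g j) = g (inv_into UNIV \<sigma> k)"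
proof -
  have "inv_into UNIV \<sigma> k < m"
    using permutes_in_image[OF permutes_inv[OF assms(1)]] assms(2) by simp
  moreover have "(\<Sum>j<m. perm_matrix \<sigma> j k * g j) = (\<Sum>j<m. if inv_into UNIV \<sigma> k = j then g j else 0)"
    using permutes_inv_eq[OF assms(1)] by (intro sum.cong) (auto simp: perm_matrix_def)
  ultimately show ?thesis
    by simp
qed

lemma perm_matrix_row_sum_1:
  assumes "\<sigma> permutes {..<m}" "j < m"
  shows "(\<Sum>k<m. perm_matrix \<sigma> j k) = 1"
  using perm_matrix_row_sum[OF assms, of "\<lambda>_. 1"] by simp

lemma perm_matrix_column_sum_1:
  assumes "\<sigma> permutes {..<m}" "k < m"
  shows "(\<Sum>j<m. perm_matrix \<sigma> j k) = 1"
  using perm_matrix_column_sum[OF assms, of "\<lambda>_. 1"] by simp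

text \<open>For a configuration of vectors \<open>v\<^sub>i\<close> with \<open>\<bar>v\<^sub>i\<^sub>j\<bar> = w\<^bsub>\<sigma>\<^sub>i j\<^esub>\<close>, the entry \<open>(j, k)\<close> of
  \<open>config_matrix\<close> sums the signs with which \<open>w\<^sub>k\<close> appears in coordinate \<open>j\<close>.\<close>
definition config_matrix :: "nat \<Rightarrow> (nat \<Rightarrow> nat \<Rightarrow> nat) \<Rightarrow> (nat \<Rightarrow> nat \<Rightarrow> int) \<Rightarrow> nat \<Rightarrow> nat \<Rightarrow> int" where
  "config_matrix n \<sigma> v j k = (\<Sum>i<n. perm_matrix (\<sigma> i) j k * unit_sign (v i j))"

lemma abs_config_matrix_le: "\<bar>config_matrix n \<sigma> v j k\<bar> \<le> (\<Sum>i<n. perm_matrix (\<sigma> i) j k)"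
  unfolding config_matrix_def by (rule order_trans[OF sum_abs]) (simp add: abs_mult)

lemma config_matrix_kernel:
  assumes perm: "\<And>i. i < n \<Longrightarrow> \<sigma> i permutes {..<m}"
    and abs_v: "\<And>i. i < n \<Longrightarrow> \<bar>v i j\<bar> = w (\<sigma> i j)"
    and zero: "(\<Sum>i<n. v i j) = 0" and "j < m"
  shows "(\<Sum>k<m. config_matrix n \<sigma> v j k * w k) = 0"
proof -
  have "(\<Sum>k<m. config_matrix n \<sigma> v j k * w k) =
        (\<Sum>k<m. \<Sum>i<n. perm_matrix (\<sigma> i) j k * (unit_sign (v i j) * w k))"
    unfolding config_matrix_def sum_distrib_right by (simp add: mult.assoc)
  also have "\<dots> = (\<Sum>i<n. \<Sum>k<m. perm_matrix (\<sigma> i) j k * (unit_sign (v i j) * w k))"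
    by (rule sum.swap)
  also have "\<dots> = (\<Sum>i<n. unit_sign (v i j) * \<bar>v i j\<bar>)"
    by (rule sum.cong[OF refl]) (simp add: perm_matrix_row_sum perm abs_v \<open>j < m\<close>)
  finally show ?thesis
    using zero by simp
qed

lemma config_matrix_row_abs_sum:
  assumes perm: "\<And>i. i < n \<Longrightarrow> \<sigma> i permutes {..<m}" and "j < m"
  shows "(\<Sum>k<m. \<bar>config_matrix n \<sigma> v j k\<bar>) \<le> n"
proof -
  have "(\<Sum>k<m. \<bar>config_matrix n \<sigma> v j k\<bar>) \<le> (\<Sum>k<m. \<Sum>i<n. perm_matrix (\<sigma> i) j k)"
    by (intro sum_mono abs_config_matrix_le)
  also have "\<dots> = n"
    by (subst sum.swap) (simp add: perm_matrix_row_sum_1 perm \<open>j < m\<close>)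
  finally show ?thesis .
qed

lemma config_matrix_column_abs_sum:
  assumes perm: "\<And>i. i < n \<Longrightarrow> \<sigma> i permutes {..<m}" and "k < m"
  shows "(\<Sum>j<m. \<bar>config_matrix n \<sigma> v j k\<bar>) \<le> n"
proof -
  have "(\<Sum>j<m. \<bar>config_matrix n \<sigma> v j k\<bar>) \<le> (\<Sum>j<m. \<Sum>i<n. perm_matrix (\<sigma> i) j k)"
    by (intro sum_mono abs_config_matrix_le)
  also have "\<dots> = n"
    by (subst sum.swap) (simp add: perm_matrix_column_sum_1 perm \<open>k < m\<close>)
  finally show ?thesis .
qed

lemma odd_config_matrix_row_sum_iff:
  assumes perm: "\<And>i. i < n \<Longrightarrow> \<sigma> i permutes {..<m}" and "j < m"
  shows "odd (\<Sum>k<m. config_matrix n \<sigma> v j k) \<longleftrightarrow> odd n"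
proof -
  have "(\<Sum>k<m. config_matrix n \<sigma> v j k) = (\<Sum>i<n. \<Sum>k<m. perm_matrix (\<sigma> i) j k * unit_sign (v i j))"
    unfolding config_matrix_def by (rule sum.swap)
  also have "\<dots> = (\<Sum>i<n. unit_sign (v i j))"
    by (simp add: perm_matrix_row_sum perm \<open>j < m\<close>)
  finally show ?thesis
    by (simp add: odd_sum_of_odd_iff)
qed

lemma odd_config_matrix_column_sum_iff:
  assumes perm: "\<And>i. i < n \<Longrightarrow> \<sigma> i permutes {..<m}" and "k < m"
  shows "odd (\<Sum>j<m. config_matrix n \<sigma> v j k) \<longleftrightarrow> odd n"
proof -
  have "(\<Sum>j<m. config_matrix n \<sigma> v j k) = (\<Sum>i<n. \<Sum>j<m. perm_matrix (\<sigma> i) j k * unit_sign (v i j))"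
    unfolding config_matrix_def by (rule sum.swap)
  also have "\<dots> = (\<Sum>i<n. unit_sign (v i (inv_into UNIV (\<sigma> i) k)))"
    by (simp add: perm_matrix_column_sum perm \<open>k < m\<close>)
  finally show ?thesis
    by (simp add: odd_sum_of_odd_iff)
qed

lemma cross_product_multiple_of_primitive:
  fixes u1 u2 u3 v1 v2 v3 a b c \<beta>1 \<beta>2 \<beta>3 :: int
  assumes u: "u1 * a + u2 * b + u3 * c = 0" and v: "v1 * a + v2 * b + v3 * c = 0"
    and \<beta>: "\<beta>1 * a + \<beta>2 * b + \<beta>3 * c = 1"
  obtains g where "u2 * v3 - u3 * v2 = g * a" "u3 * v1 - u1 * v3 = g * b" "u1 * v2 - u2 * v1 = g * c"
proof -
  define X1 X2 X3 where "X1 = u2 * v3 - u3 * v2" and "X2 = u3 * v1 - u1 * v3" and "X3 = u1 * v2 - u2 * v1"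
  have "a * X2 - b * X1 = u3 * (v1 * a + v2 * b + v3 * c) - v3 * (u1 * a + u2 * b + u3 * c)"
    and "b * X3 - c * X2 = u1 * (v1 * a + v2 * b + v3 * c) - v1 * (u1 * a + u2 * b + u3 * c)"
    and "a * X3 - c * X1 = v2 * (u1 * a + u2 * b + u3 * c) - u2 * (v1 * a + v2 * b + v3 * c)"
    by (simp_all add: X1_def X2_def X3_def algebra_simps)
  then have r: "a * X2 = b * X1" "b * X3 = c * X2" "a * X3 = c * X1"
    by (simp_all add: u v)
  define g where "g = \<beta>1 * X1 + \<beta>2 * X2 + \<beta>3 * X3"
  have "g * a = \<beta>1 * (a * X1) + \<beta>2 * (a * X2) + \<beta>3 * (a * X3)"
    by (simp add: g_def algebra_simps)
  also have "\<dots> = X1 * (\<beta>1 * a + \<beta>2 * b + \<beta>3 * c)"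
    unfolding r(1,3) by (simp add: algebra_simps)
  finally have a: "g * a = X1"
    by (simp add: \<beta>)
  have "g * b = \<beta>1 * (b * X1) + \<beta>2 * (b * X2) + \<beta>3 * (b * X3)"
    by (simp add: g_def algebra_simps)
  also have "\<dots> = X2 * (\<beta>1 * a + \<beta>2 * b + \<beta>3 * c)"
    unfolding r(1)[symmetric] r(2) by (simp add: algebra_simps)
  finally have b: "g * b = X2"
    by (simp add: \<beta>)
  have "g * c = \<beta>1 * (c * X1) + \<beta>2 * (c * X2) + \<beta>3 * (c * X3)"
    by (simp add: g_def algebra_simps)
  also have "\<dots> = X3 * (\<beta>1 * a + \<beta>2 * b + \<beta>3 * c)"
    unfolding r(2,3)[symmetric] by (simp add: algebra_simps)
  finally have c: "g * c = X3"
    by (simp add: \<beta>)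
  from a b c show ?thesis
    using that[of g] by (simp add: X1_def X2_def X3_def)
qed

lemma abs_minor_le:
  fixes x y z u :: int
  assumes "\<bar>x\<bar> \<le> 5" "\<bar>y\<bar> \<le> 5" "\<bar>z\<bar> \<le> 5" "\<bar>u\<bar> \<le> 5"
  shows "\<bar>x * y - z * u\<bar> \<le> 50"
proof -
  have "\<bar>x\<bar> * \<bar>y\<bar> \<le> 5 * 5" "\<bar>z\<bar> * \<bar>u\<bar> \<le> 5 * 5"
    using assms by (intro mult_mono; simp)+
  then show ?thesis
    using abs_triangle_ineq4[of "x * y" "z * u"] by (simp add: abs_mult)
qed

lemma kernel_small_if_rows_independent:
  fixes R :: "nat \<Rightarrow> nat \<Rightarrow> int" and w \<beta> :: "nat \<Rightarrow> int"
  assumes jkl: "j < 3" "k < 3" "l < 3" "R j k * R 0 l \<noteq> R j l * R 0 k"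
    and row: "\<And>i. i < 3 \<Longrightarrow> (\<Sum>k<3. \<bar>R i k\<bar>) \<le> 5"
    and kernel: "\<And>i. i < 3 \<Longrightarrow> (\<Sum>k<3. R i k * w k) = 0"
    and bezout: "(\<Sum>k<3. \<beta> k * w k) = 1"
  shows "\<forall>k<3. \<bar>w k\<bar> \<le> 50"
proof -
  obtain g where g: "R 0 1 * R j 2 - R 0 2 * R j 1 = g * w 0" "R 0 2 * R j 0 - R 0 0 * R j 2 = g * w 1"
    "R 0 0 * R j 1 - R 0 1 * R j 0 = g * w 2"
    using cross_product_multiple_of_primitive[of "R 0 0" "w 0" "R 0 1" "w 1" "R 0 2" "w 2"
        "R j 0" "R j 1" "R j 2" "\<beta> 0" "\<beta> 1" "\<beta> 2"]
      kernel[of 0] kernel[OF jkl(1)] bezout by (auto simp: sum_lessThan_3)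
  have "g \<noteq> 0"
  proof
    assume "g = 0"
    then show False
      using g jkl by (auto simp: less_3_iff algebra_simps)
  qed
  then have "1 \<le> \<bar>g\<bar>"
    by arith
  then have "\<bar>w i\<bar> \<le> \<bar>g * w i\<bar>" for i
    using mult_right_mono[of 1 "\<bar>g\<bar>" "\<bar>w i\<bar>"] by (simp add: abs_mult)
  moreover have "\<bar>R i k\<bar> \<le> 5" if "i < 3" "k < 3" for i k
    using row[OF that(1)] that(2) by (auto simp: sum_lessThan_3 less_3_iff)
  then have "\<bar>g * w 0\<bar> \<le> 50" "\<bar>g * w 1\<bar> \<le> 50" "\<bar>g * w 2\<bar> \<le> 50"
    unfolding g[symmetric] using jkl(1) by (intro abs_minor_le; simp)+
  ultimately show ?thesis
    by (auto simp: less_3_iff intro: order_trans)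
qed

lemma rank_one_odd_matrix_nonzero:
  fixes R :: "nat \<Rightarrow> nat \<Rightarrow> int"
  assumes par: "\<And>j k l. j < 3 \<Longrightarrow> k < 3 \<Longrightarrow> l < 3 \<Longrightarrow> R j k * R 0 l = R j l * R 0 k"
    and odd_row: "\<And>j. j < 3 \<Longrightarrow> odd (\<Sum>k<3. R j k)"
    and odd_column: "\<And>k. k < 3 \<Longrightarrow> odd (\<Sum>j<3. R j k)"
    and "j < 3" "k < 3"
  shows "R j k \<noteq> 0"
proof -
  have nonzero_row: "\<exists>l<3. R j l \<noteq> 0" if "j < 3" for j
    using odd_row[OF that] by (auto simp: sum_lessThan_3 less_3_iff)
  have nonzero_column: "\<exists>j<3. R j k \<noteq> 0" if "k < 3" for k
    using odd_column[OF that] by (auto simp: sum_lessThan_3 less_3_iff)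
  have R0: "R 0 k \<noteq> 0" if "k < 3" for k
  proof
    assume R0k: "R 0 k = 0"
    obtain l where "l < 3" "R 0 l \<noteq> 0"
      using nonzero_row[of 0] by auto
    then have "R j k = 0" if "j < 3" for j
      using par[OF that \<open>k < 3\<close> \<open>l < 3\<close>] R0k by simp
    then show False
      using nonzero_column[OF \<open>k < 3\<close>] by blast
  qed
  show ?thesis
  proof
    assume "R j k = 0"
    obtain l where "l < 3" "R j l \<noteq> 0"
      using nonzero_row[OF \<open>j < 3\<close>] by blast
    then show False
      using par[OF \<open>j < 3\<close> \<open>k < 3\<close> \<open>l < 3\<close>] \<open>R j k = 0\<close> R0[OF \<open>k < 3\<close>] by simp
  qed
qed

lemma rank_one_odd_matrix_first_row:
  fixes R :: "nat \<Rightarrow> nat \<Rightarrow> int"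
  assumes par: "\<And>j k l. j < 3 \<Longrightarrow> k < 3 \<Longrightarrow> l < 3 \<Longrightarrow> R j k * R 0 l = R j l * R 0 k"
    and row: "\<And>j. j < 3 \<Longrightarrow> (\<Sum>k<3. \<bar>R j k\<bar>) \<le> 5"
    and column: "\<And>k. k < 3 \<Longrightarrow> (\<Sum>j<3. \<bar>R j k\<bar>) \<le> 5"
    and odd_row: "\<And>j. j < 3 \<Longrightarrow> odd (\<Sum>k<3. R j k)"
    and odd_column: "\<And>k. k < 3 \<Longrightarrow> odd (\<Sum>j<3. R j k)"
  shows "\<forall>k<3. \<bar>R 0 k\<bar> = 1"
proof -
  note nonzero = rank_one_odd_matrix_nonzero[OF par odd_row odd_column]
  have "\<bar>R 0 0\<bar> + \<bar>R 0 1\<bar> + \<bar>R 0 2\<bar> \<le> 5"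
    using row[of 0] by (simp add: sum_lessThan_3)
  then have "\<bar>R 0 0\<bar> = 1 \<or> \<bar>R 0 1\<bar> = 1 \<or> \<bar>R 0 2\<bar> = 1"
    using nonzero[of 0 0] nonzero[of 0 1] nonzero[of 0 2] by linarith
  then obtain k0 where k0: "k0 < 3" "\<bar>R 0 k0\<bar> = 1"
    by (auto simp: less_3_iff)
  have "\<bar>R 0 l\<bar> = 1" if "l < 3" for l
  proof -
    have col_l: "\<bar>R j l\<bar> = \<bar>R j k0\<bar> * \<bar>R 0 l\<bar>" if "j < 3" for j
      using arg_cong[OF par[OF that \<open>l < 3\<close> k0(1)], of abs] k0(2) by (simp add: abs_mult)
    have "3 \<le> (\<Sum>j<3. \<bar>R j k0\<bar>)"
      using nonzero[of 0 k0] nonzero[of 1 k0] nonzero[of 2 k0] k0(1) by (simp add: sum_lessThan_3)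
    then have "3 * \<bar>R 0 l\<bar> \<le> (\<Sum>j<3. \<bar>R j k0\<bar>) * \<bar>R 0 l\<bar>"
      by (intro mult_right_mono) simp_all
    also have "\<dots> = (\<Sum>j<3. \<bar>R j l\<bar>)"
      unfolding sum_distrib_right by (rule sum.cong[OF refl]) (rule col_l[symmetric], simp)
    also have "\<dots> \<le> 5"
      using column[OF that] .
    finally show ?thesis
      using nonzero[of 0 l] that by linarith
  qed
  then show ?thesis
    by blast
qed

lemma odd_matrix_kernel_3:
  fixes R :: "nat \<Rightarrow> nat \<Rightarrow> int" and w \<beta> :: "nat \<Rightarrow> int"
  assumes row: "\<And>j. j < 3 \<Longrightarrow> (\<Sum>k<3. \<bar>R j k\<bar>) \<le> 5"
    and column: "\<And>k. k < 3 \<Longrightarrow> (\<Sum>j<3. \<bar>R j k\<bar>) \<le> 5"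
    and odd_row: "\<And>j. j < 3 \<Longrightarrow> odd (\<Sum>k<3. R j k)"
    and odd_column: "\<And>k. k < 3 \<Longrightarrow> odd (\<Sum>j<3. R j k)"
    and kernel: "\<And>j. j < 3 \<Longrightarrow> (\<Sum>k<3. R j k * w k) = 0"
    and bezout: "(\<Sum>k<3. \<beta> k * w k) = 1"
  shows "(\<forall>k<3. \<bar>w k\<bar> \<le> 50) \<or> (\<exists>\<epsilon>. (\<forall>k<3. \<bar>\<epsilon> k\<bar> = 1) \<and> (\<Sum>k<3. \<epsilon> k * w k) = 0)"
proof (cases "\<forall>j<3. \<forall>k<3. \<forall>l<3. R j k * R 0 l = R j l * R 0 k")
  case False
  then obtain j k l where "j < 3" "k < 3" "l < 3" "R j k * R 0 l \<noteq> R j l * R 0 k"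
    by blast
  then show ?thesis
    using kernel_small_if_rows_independent row kernel bezout by blast
next
  case True
  then have "\<forall>k<3. \<bar>R 0 k\<bar> = 1"
    using rank_one_odd_matrix_first_row[OF _ row column odd_row odd_column] by blast
  then show ?thesis
    using kernel[of 0] by (intro disjI2 exI[of _ "R 0"]) auto
qed

section \<open>The form \<open>x\<^sup>2 + x y + y\<^sup>2\<close>\<close>

lemma fermat_theorem_int:
  fixes p :: nat and x :: int
  assumes "prime p" "\<not> int p dvd x"
  shows "[x ^ (p - 1) = 1] (mod int p)"
proof -
  define X where "X = nat (x mod int p)"
  have X: "int X = x mod int p"
    using assms(1) prime_gt_0_nat by (simp add: X_def)
  have "\<not> p dvd X"
  proof
    assume "p dvd X"
    then have "int p dvd x mod int p"
      using X by (metis int_dvd_int_iff)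
    then show False
      using assms(2) by (simp add: dvd_mod_iff)
  qed
  then have "[X ^ (p - 1) = 1] (mod p)"
    using fermat_theorem[OF assms(1)] by blast
  then have "[int X ^ (p - 1) = 1] (mod int p)"
    by (metis cong_int_iff of_nat_1 of_nat_power)
  moreover have "[x ^ (p - 1) = int X ^ (p - 1)] (mod int p)"
    using X by (intro cong_pow) (simp add: cong_def)
  ultimately show ?thesis
    using cong_trans by blast
qed

lemma cube_cong_imp_cong_mod_prime:
  fixes p :: nat and x y :: int
  assumes prime: "prime p" and p_mod: "p mod 3 = 2" and cube: "[x ^ 3 = y ^ 3] (mod int p)"
  shows "[x = y] (mod int p)"
proof -
  have prime_int: "prime (int p)"
    using prime by simp
  show ?thesis
  proof (cases "int p dvd y")
    case True
    then have "int p dvd y ^ 3"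
      by (simp add: power3_eq_cube)
    then have "int p dvd x ^ 3"
      using cong_dvd_iff[OF cube] by blast
    then have "int p dvd x"
      using prime_int prime_dvd_power by blast
    with True show ?thesis
      by (simp add: cong_iff_dvd_diff)
  next
    case False
    then have "\<not> int p dvd y ^ 3"
      using prime_int prime_dvd_power by blast
    then have "\<not> int p dvd x ^ 3"
      using cong_dvd_iff[OF cube] by blast
    then have "\<not> int p dvd x"
      by (auto simp: power3_eq_cube)
    define q where "q = (p - 2) div 3"
    have q: "p - 1 = 3 * q + 1"
      unfolding q_def using p_mod prime_ge_2_nat[OF prime] by presburger
    have "[(y ^ 3) ^ q * x = (x ^ 3) ^ q * x] (mod int p)"
      using cong_pow[OF cong_sym[OF cube]] cong_refl by (rule cong_mult)
    also have "(x ^ 3) ^ q * x = x ^ (p - 1)"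
      unfolding q by (simp add: power_mult power_add)
    also have "[x ^ (p - 1) = 1] (mod int p)"
      using fermat_theorem_int[OF prime \<open>\<not> int p dvd x\<close>] .
    also have "[1 = y ^ (p - 1)] (mod int p)"
      using fermat_theorem_int[OF prime False] by (rule cong_sym)
    also have "y ^ (p - 1) = (y ^ 3) ^ q * y"
      unfolding q by (simp add: power_mult power_add)
    finally have "[(y ^ 3) ^ q * x = (y ^ 3) ^ q * y] (mod int p)" .
    moreover have "coprime ((y ^ 3) ^ q) (int p)"
      using prime_imp_coprime[OF prime_int False] by (simp add: ac_simps)
    ultimately show ?thesis
      using cong_mult_lcancel by blast
  qed
qed

lemma prime_dvd_eisenstein_form:
  fixes p :: nat and x y :: int
  assumes prime: "prime p" and p_mod: "p mod 3 = 2" and dvd: "int p dvd x\<^sup>2 + x * y + y\<^sup>2"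
  shows "int p dvd x \<and> int p dvd y"
proof -
  have prime_int: "prime (int p)"
    using prime by simp
  have "x ^ 3 - y ^ 3 = (x - y) * (x\<^sup>2 + x * y + y\<^sup>2)"
    by (simp add: power2_eq_square power3_eq_cube algebra_simps)
  then have "[x ^ 3 = y ^ 3] (mod int p)"
    using dvd by (simp add: cong_iff_dvd_diff)
  then have "[y = x] (mod int p)"
    using cube_cong_imp_cong_mod_prime[OF prime p_mod] cong_sym by blast
  then obtain k where k: "x = y + int p * k"
    unfolding cong_iff_lin by blast
  have "3 * y\<^sup>2 = (x\<^sup>2 + x * y + y\<^sup>2) - int p * (3 * k * y + int p * k\<^sup>2)"
    unfolding k by (simp add: power2_eq_square algebra_simps)
  moreover have "int p dvd (x\<^sup>2 + x * y + y\<^sup>2) - int p * (3 * k * y + int p * k\<^sup>2)"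
    using dvd by (intro dvd_diff) simp_all
  ultimately have "int p dvd 3 * y\<^sup>2"
    by (simp only:)
  moreover have "\<not> int p dvd 3"
  proof
    assume "int p dvd 3"
    then have "p dvd 3"
      by presburger
    then have "p \<le> 3"
      by (simp add: dvd_imp_le)
    moreover have "p \<noteq> 3"
      using p_mod by auto
    ultimately have "p = 2"
      using prime_ge_2_nat[OF prime] by linarith
    with \<open>p dvd 3\<close> show False
      by simp
  qed
  ultimately have "int p dvd y"
    using prime_int by (simp add: prime_dvd_mult_iff prime_dvd_power_iff)
  then show ?thesis
    using k by simp
qed

lemma eisenstein_form_nonneg: "0 \<le> (x::int)\<^sup>2 + x * y + y\<^sup>2"
proof -
  have "2 * (x\<^sup>2 + x * y + y\<^sup>2) = x\<^sup>2 + y\<^sup>2 + (x + y)\<^sup>2"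
    by (simp add: power2_eq_square algebra_simps)
  moreover have "0 \<le> x\<^sup>2 + y\<^sup>2 + (x + y)\<^sup>2"
    by simp
  ultimately show ?thesis
    by (smt (verit))
qed

lemma even_multiplicity_eisenstein_form:
  fixes p m :: nat and x y :: int
  assumes prime: "prime p" and p_mod: "p mod 3 = 2" and m: "int m = x\<^sup>2 + x * y + y\<^sup>2"
  shows "even (multiplicity p m)"
  using m
proof (induction m arbitrary: x y rule: less_induct)
  case (less m)
  show ?case
  proof (cases "m \<noteq> 0 \<and> p dvd m")
    case False
    then show ?thesis
      by (auto simp: not_dvd_imp_multiplicity_0)
  next
    case True
    then have "int p dvd x\<^sup>2 + x * y + y\<^sup>2"
      using less.prems by (metis of_nat_dvd_iff)
    then have "int p dvd x" "int p dvd y"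
      using prime_dvd_eisenstein_form[OF prime p_mod] by blast+
    then obtain x' y' where x': "x = int p * x'" and y': "y = int p * y'"
      by (elim dvdE)
    define m' where "m' = nat (x'\<^sup>2 + x' * y' + y'\<^sup>2)"
    have m': "int m' = x'\<^sup>2 + x' * y' + y'\<^sup>2"
      using eisenstein_form_nonneg by (simp add: m'_def)
    have "int m = int (p * (p * m'))"
      using less.prems m' unfolding x' y' by (simp add: power2_eq_square algebra_simps)
    then have m: "m = p * (p * m')"
      by (simp only: of_nat_eq_iff)
    have "p \<ge> 2"
      using prime by (simp add: prime_ge_2_nat)
    have "m' \<noteq> 0"
      using m True by auto
    moreover have "2 * (2 * m') \<le> p * (p * m')"
      using \<open>p \<ge> 2\<close> by (intro mult_le_mono) simp_all
    ultimately have "m' < m"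
      unfolding m by linarith
    then have "even (multiplicity p m')"
      using less.IH m' by blast
    moreover have "multiplicity p m = Suc (Suc (multiplicity p m'))"
      unfolding m using \<open>p \<ge> 2\<close> \<open>m' \<noteq> 0\<close> by (simp add: multiplicity_times_same)
    ultimately show ?thesis
      by simp
  qed
qed

lemma odd_multiplicity_if_dvd_sqfree_part:
  fixes p t :: nat
  assumes prime: "prime p" and dvd: "p dvd sqfree_part t"
  shows "odd (multiplicity p t)"
proof -
  have fin: "finite (prime_factors t)"
    by simp
  have "p dvd (\<Prod>q\<in>prime_factors t. q ^ (multiplicity q t mod 2))"
    using dvd unfolding sqfree_part_def .
  then have "\<exists>q\<in>prime_factors t. p dvd q ^ (multiplicity q t mod 2)"
    using prime_dvd_prod_iff[OF fin prime] by simp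
  then obtain q where q: "q \<in> prime_factors t" "p dvd q ^ (multiplicity q t mod 2)"
    by blast
  have "multiplicity q t mod 2 \<noteq> 0"
  proof
    assume "multiplicity q t mod 2 = 0"
    then have "p dvd 1"
      using q(2) by simp
    then show False
      using prime by simp
  qed
  moreover have "p dvd q"
    using q(2) prime prime_dvd_power by blast
  then have "p = q"
    using primes_dvd_imp_eq[OF prime] q(1) by auto
  ultimately show ?thesis
    by (simp add: even_iff_mod_2_eq_zero)
qed

lemma T_not_twice_eisenstein_form:
  fixes t :: nat and x y :: int
  assumes "t \<in> T"
  shows "int t \<noteq> 2 * (x\<^sup>2 + x * y + y\<^sup>2)"
proof
  assume t: "int t = 2 * (x\<^sup>2 + x * y + y\<^sup>2)"
  obtain p :: nat where p: "prime p" "odd p" "p dvd sqfree_part t" "p mod 3 = 2"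
    using assms unfolding T_def by blast
  define m where "m = nat (x\<^sup>2 + x * y + y\<^sup>2)"
  have m: "int m = x\<^sup>2 + x * y + y\<^sup>2"
    using eisenstein_form_nonneg by (simp add: m_def)
  then have "int t = int (2 * m)"
    using t by simp
  then have t_m: "t = 2 * m"
    by (simp only: of_nat_eq_iff)
  have "m \<noteq> 0"
    using assms t_m unfolding T_def by (intro notI) simp
  then have "multiplicity p t = multiplicity p 2 + multiplicity p m"
    unfolding t_m using p(1) by (simp add: prime_elem_multiplicity_mult_distrib)
  moreover have "multiplicity p (2::nat) = 0"
    using p(1,2) by (intro prime_multiplicity_other) auto
  ultimately show False
    using odd_multiplicity_if_dvd_sqfree_part[OF p(1,3)]
      even_multiplicity_eisenstein_form[OF p(1,4) m] by simp
qed

section \<open>Small configurations\<close>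

lemma sum_squares_signed_relation:
  fixes a b c e0 e1 e2 :: int
  assumes "\<bar>e0\<bar> = 1" "\<bar>e1\<bar> = 1" "\<bar>e2\<bar> = 1" "e0 * a + e1 * b + e2 * c = 0"
  shows "a\<^sup>2 + b\<^sup>2 + c\<^sup>2 = 2 * (a\<^sup>2 + a * (e0 * e1 * b) + (e0 * e1 * b)\<^sup>2)"
proof -
  have sq: "e0\<^sup>2 = 1" "e1\<^sup>2 = 1" "e2\<^sup>2 = 1"
    using assms(1-3) by (simp_all add: abs_square_eq_1)
  have "c\<^sup>2 = e2\<^sup>2 * c\<^sup>2"
    using sq(3) by simp
  also have "\<dots> = (e0 * a + e1 * b)\<^sup>2"
    using assms(4) by (simp add: power_mult_distrib[symmetric] eq_neg_iff_add_eq_0[symmetric] add.assoc)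
  also have "\<dots> = e0\<^sup>2 * a\<^sup>2 + 2 * (e0 * e1) * a * b + e1\<^sup>2 * b\<^sup>2"
    by (simp add: power2_eq_square algebra_simps)
  finally have c: "c\<^sup>2 = a\<^sup>2 + 2 * (e0 * e1) * a * b + b\<^sup>2"
    using sq by simp
  have "(e0 * e1 * b)\<^sup>2 = b\<^sup>2"
    using sq by (simp add: power_mult_distrib)
  then show ?thesis
    using c by (simp add: algebra_simps)
qed

lemma small_or_twice_eisenstein_form:
  fixes w :: "nat \<Rightarrow> int"
  assumes "(\<forall>k<3. \<bar>w k\<bar> \<le> 50) \<or> (\<exists>\<epsilon>. (\<forall>k<3. \<bar>\<epsilon> k\<bar> = 1) \<and> (\<Sum>k<3. \<epsilon> k * w k) = 0)"
  shows "(\<Sum>k<3. (w k)\<^sup>2) \<le> 7500 \<or> (\<exists>x y. (\<Sum>k<3. (w k)\<^sup>2) = 2 * (x\<^sup>2 + x * y + y\<^sup>2))"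
  using assms
proof
  assume "\<forall>k<3. \<bar>w k\<bar> \<le> 50"
  then have "(w k)\<^sup>2 \<le> 2500" if "k < 3" for k
    using that power_mono[of "\<bar>w k\<bar>" 50 2] by simp
  then have "(w 0)\<^sup>2 \<le> 2500" "(w 1)\<^sup>2 \<le> 2500" "(w 2)\<^sup>2 \<le> 2500"
    by simp_all
  then show ?thesis
    unfolding sum_lessThan_3 by linarith
next
  assume "\<exists>\<epsilon>. (\<forall>k<3. \<bar>\<epsilon> k\<bar> = 1) \<and> (\<Sum>k<3. \<epsilon> k * w k) = 0"
  then obtain \<epsilon> :: "nat \<Rightarrow> int" where "\<forall>k<3. \<bar>\<epsilon> k\<bar> = 1" "\<epsilon> 0 * w 0 + \<epsilon> 1 * w 1 + \<epsilon> 2 * w 2 = 0"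
    by (auto simp: sum_lessThan_3)
  then have "(\<Sum>k<3. (w k)\<^sup>2) = 2 * ((w 0)\<^sup>2 + w 0 * (\<epsilon> 0 * \<epsilon> 1 * w 1) + (\<epsilon> 0 * \<epsilon> 1 * w 1)\<^sup>2)"
    using sum_squares_signed_relation[of "\<epsilon> 0" "\<epsilon> 1" "\<epsilon> 2" "w 0" "w 1" "w 2"]
    by (simp add: sum_lessThan_3)
  then show ?thesis
    by blast
qed

lemma no_small_odd_zero_sum_config:
  fixes t n :: nat and w \<beta> :: "nat \<Rightarrow> int"
  assumes reps: "all_reps_signed_permutations w" and norm: "(\<Sum>k<3. (w k)\<^sup>2) = int t"
    and bezout: "(\<Sum>k<3. \<beta> k * w k) = 1"
    and large: "7500 < t" and not_eisenstein: "\<And>x y. int t \<noteq> 2 * (x\<^sup>2 + x * y + y\<^sup>2)"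
    and n: "odd n" "n \<le> 5"
  shows "\<not> zero_sum_config 3 t n"
proof
  assume "zero_sum_config 3 t n"
  then obtain v :: "nat \<Rightarrow> nat \<Rightarrow> int"
    where v: "\<forall>i<n. (\<Sum>k<3. (v i k)\<^sup>2) = int t" "\<forall>k<3. (\<Sum>i<n. v i k) = 0"
    unfolding zero_sum_config_iff by blast
  have "\<forall>i. \<exists>\<sigma>. i < n \<longrightarrow> \<sigma> permutes {..<3} \<and> (\<forall>k<3. \<bar>v i k\<bar> = w (\<sigma> k))"
    using reps v(1) norm unfolding all_reps_signed_permutations_def by simp
  then obtain \<sigma> where \<sigma>: "\<And>i. i < n \<Longrightarrow> \<sigma> i permutes {..<3}"
    "\<And>i k. i < n \<Longrightarrow> k < 3 \<Longrightarrow> \<bar>v i k\<bar> = w (\<sigma> i k)"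
    by metis
  let ?R = "config_matrix n \<sigma> v"
  have "(\<forall>k<3. \<bar>w k\<bar> \<le> 50) \<or> (\<exists>\<epsilon>. (\<forall>k<3. \<bar>\<epsilon> k\<bar> = 1) \<and> (\<Sum>k<3. \<epsilon> k * w k) = 0)"
  proof (rule odd_matrix_kernel_3[where R = ?R, OF _ _ _ _ _ bezout])
    fix j :: nat
    assume "j < 3"
    show "(\<Sum>k<3. ?R j k * w k) = 0"
      by (rule config_matrix_kernel) (use \<sigma> v(2) \<open>j < 3\<close> in auto)
    have "(\<Sum>k<3. \<bar>?R j k\<bar>) \<le> n" "odd (\<Sum>k<3. ?R j k) \<longleftrightarrow> odd n"
      by (rule config_matrix_row_abs_sum odd_config_matrix_row_sum_iff; use \<sigma>(1) \<open>j < 3\<close> in auto)+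
    then show "(\<Sum>k<3. \<bar>?R j k\<bar>) \<le> 5" "odd (\<Sum>k<3. ?R j k)"
      using n by simp_all
  next
    fix k :: nat
    assume "k < 3"
    have "(\<Sum>j<3. \<bar>?R j k\<bar>) \<le> n" "odd (\<Sum>j<3. ?R j k) \<longleftrightarrow> odd n"
      by (rule config_matrix_column_abs_sum odd_config_matrix_column_sum_iff; use \<sigma>(1) \<open>k < 3\<close> in auto)+
    then show "(\<Sum>j<3. \<bar>?R j k\<bar>) \<le> 5" "odd (\<Sum>j<3. ?R j k)"
      using n by simp_all
  qed
  then show False
    using small_or_twice_eisenstein_form[of w] norm large not_eisenstein by auto
qed

lemma less_C_if_no_small_odd_config:
  assumes "\<exists>n. odd n \<and> zero_sum_config m r n"
    and "\<And>n. odd n \<Longrightarrow> n \<le> k \<Longrightarrow> \<not> zero_sum_config m r n"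
  shows "k < C m r"
proof -
  have "odd (LEAST n. odd n \<and> zero_sum_config m r n) \<and> zero_sum_config m r (LEAST n. odd n \<and> zero_sum_config m r n)"
    using assms(1) by (rule LeastI_ex)
  then show ?thesis
    using assms unfolding C_def by (auto simp: not_le[symmetric])
qed

theorem theorem7:
  fixes t :: nat
  assumes "t \<in> T" and "t \<ge> 10 ^ 6" and "P t = 1"
  shows "C 3 t > 5"
proof -
  obtain w :: "nat \<Rightarrow> int" where w: "(\<Sum>k<3. (w k)\<^sup>2) = int t"
    and reps: "all_reps_signed_permutations w"
    using P_eq_1_imp_all_reps_signed_permutations[OF assms(3)] by blast
  have "t mod 4 = 2"
    using assms(1) unfolding T_def by blast
  then have "(\<Sum>k<3. (w k)\<^sup>2) mod 4 = 2" "even t"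
    unfolding w by presburger+
  then obtain \<beta> where \<beta>: "(\<Sum>k<3. \<beta> k * w k) = 1"
    using gcd3_eq_1_if_all_reps_signed_permutations[OF reps] gcd3_bezout by metis
  show ?thesis
  proof (rule less_C_if_no_small_odd_config)
    show "\<exists>n. odd n \<and> zero_sum_config 3 t n"
      using odd_zero_sum_config_exists[OF w _ \<beta>] \<open>even t\<close> by simp
    show "\<not> zero_sum_config 3 t n" if "odd n" "n \<le> 5" for n
      using no_small_odd_zero_sum_config[OF reps w \<beta> _ T_not_twice_eisenstein_form[OF assms(1)] that]
        assms(2) by simp
  qed
qed

end
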